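(* For every integer $n\ge6$, either $v_n>1$ or the numerator of the rational number $v_n$ written in lowest terms is not $1$.
   Context: $v_n:=\prod_{i=1}^n \frac{|\zeta(1-2i)|}{2}$, where $\zeta$ is the Riemann zeta function (so $|\zeta(1-2i)|/2=|B_{2i}|/(4i)$ with $B_{2i}$ the Bernoulli numbers). *)

theory Defs
  imports Complex_Main
begin

text \<open>Bernoulli numbers B_m (convention B_1 = -1/2; irrelevant here since only even
  indices 2i with i >= 1 are used), defined by the standard recurrence
  sum_{k=0}^{m} (m+1 choose k) B_k = 0 for m >= 1, B_0 = 1.\<close>
fun bernoulli :: "nat \<Rightarrow> rat" where
  "bernoulli m =
     (if m = 0 then 1
      else - (\<Sum>k<m. of_nat ((m + 1) choose k) * bernoulli k) / of_nat (m + 1))"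

text \<open>v_n = prod_{i=1}^n |zeta(1-2i)|/2 = prod_{i=1}^n |B_{2i}|/(4i), as a rational number.\<close>
definition v :: "nat \<Rightarrow> rat" where
  "v n = (\<Prod>i=1..n. \<bar>bernoulli (2 * i)\<bar> / of_nat (4 * i))"

lemma "bernoulli 2 = 1/6" "bernoulli 4 = -1/30" "bernoulli 12 = -691/2730"
  by (simp_all add: eval_nat_numeral lessThan_Suc)

end

theory Submission
  imports Defs "HOL-Computational_Algebra.Formal_Power_Series"
begin

text \<open>Write \<open>t j = \<bar>B(2j)\<bar>\<close>. Euler's convolution identity for Bernoulli numbers, which
  comes from the Riccati equation satisfied by \<open>x / (e^x - 1)\<close>, reads
  \<open>(2n + 1) t n = \<Sum>j\<in>{1..<n}. C(2n, 2j) t j t (n - j)\<close>, a sum of positive terms. Its two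
  boundary terms alone give \<open>(2n + 3) t (n + 1) \<ge> (n + 1)(2n + 1) t n / 3\<close>, hence \<open>t n \<ge> 4n\<close>
  for \<open>n \<ge> 9\<close>, so from then on every factor \<open>t n / (4n)\<close> of \<open>v n\<close> is at least 1. Since
  \<open>v 14 > 1\<close>, this settles \<open>n \<ge> 14\<close>; for \<open>6 \<le> n \<le> 13\<close> the exact value of \<open>v n\<close> is
  computed, and its numerator keeps the prime factor 691 of the numerator of \<open>B(12)\<close>.\<close>

unbundle fps_syntax

declare bernoulli.simps [simp del]

lemma bernoulli_recurrence:
  assumes "m \<ge> 1"
  shows "(\<Sum>k\<le>m. of_nat (Suc m choose k) * bernoulli k) = 0"
proof -
  have "bernoulli m * of_nat (Suc m) = - (\<Sum>k<m. of_nat (Suc m choose k) * bernoulli k)"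
    using assms by (simp add: bernoulli.simps[of m] del: of_nat_Suc)
  then show ?thesis
    by (simp add: lessThan_Suc_atMost[symmetric] mult.commute del: of_nat_Suc)
qed

lemma bernoulli_0 [simp]: "bernoulli 0 = 1"
  by (simp add: bernoulli.simps)

lemma bernoulli_1: "bernoulli (Suc 0) = - 1/2"
  by (simp add: bernoulli.simps)

lemma bernoulli_2: "bernoulli 2 = 1/6"
  by (simp add: bernoulli.simps[of 2] bernoulli_1 lessThan_nat_numeral)

definition bernoulli_fps :: "rat fps" where
  "bernoulli_fps = Abs_fps (\<lambda>k. bernoulli k / fact k)"

lemma bernoulli_fps_nth [simp]: "bernoulli_fps $ k = bernoulli k / fact k"
  by (simp add: bernoulli_fps_def)

lemma bernoulli_fps_mult_exp: "bernoulli_fps * (fps_exp 1 - 1) = fps_X"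
proof (rule fps_ext)
  fix n
  show "(bernoulli_fps * (fps_exp 1 - 1)) $ n = fps_X $ n"
  proof (cases n)
    case (Suc m)
    have "(bernoulli_fps * (fps_exp 1 - 1)) $ n
        = (\<Sum>i\<le>m. bernoulli i / fact i * (1 / fact (Suc m - i)))"
      by (simp add: fps_mult_nth Suc atLeast0AtMost Suc_diff_le ac_simps)
    also have "\<dots> = (\<Sum>i\<le>m. of_nat (Suc m choose i) * bernoulli i) / fact (Suc m)"
      unfolding sum_divide_distrib
      by (rule sum.cong) (auto simp: binomial_fact Suc_diff_le field_simps simp del: of_nat_Suc fact_Suc)
    also have "\<dots> = fps_X $ n"
      using bernoulli_recurrence[of m] by (cases "m = 0") (simp_all add: Suc)
    finally show ?thesis .
  qed simp
qed

text \<open>The Riccati equation of \<open>F = x / (e\<^sup>x - 1)\<close>. Multiplying by \<open>(e\<^sup>x - 1)\<^sup>2\<close> reduces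
  it to \<open>F (e\<^sup>x - 1) = x\<close> and the derivative of that identity, avoiding division of series.\<close>
lemma bernoulli_fps_square:
  "bernoulli_fps * bernoulli_fps = (1 - fps_X) * bernoulli_fps - fps_X * fps_deriv bernoulli_fps"
proof -
  let ?F = bernoulli_fps and ?E = "fps_exp 1 - 1 :: rat fps" and ?X = "fps_X :: rat fps"
  have FE: "?F * ?E = ?X"
    by (rule bernoulli_fps_mult_exp)
  have "1 = fps_deriv (?F * ?E)"
    by (simp add: FE)
  also have "\<dots> = fps_deriv ?F * ?E + ?F * ?E + ?F"
    by (simp add: fps_deriv_mult algebra_simps)
  finally have DE: "fps_deriv ?F * ?E = 1 - ?X - ?F"
    by (simp add: FE[symmetric] algebra_simps)
  have "?E \<noteq> 0"
    by (metis fps_X_neq_zero FE mult_zero_right)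
  moreover have "(?F * ?F - ((1 - ?X) * ?F - ?X * fps_deriv ?F)) * (?E * ?E) = 0"
  proof -
    have "(?F * ?F - ((1 - ?X) * ?F - ?X * fps_deriv ?F)) * (?E * ?E)
        = (?F * ?E) * (?F * ?E) - (1 - ?X) * (?F * ?E) * ?E + ?X * ?E * (fps_deriv ?F * ?E)"
      by (simp add: algebra_simps)
    also have "\<dots> = ?X * ?X - (1 - ?X) * ?X * ?E + ?X * ?E * (1 - ?X - ?F)"
      unfolding FE DE ..
    also have "\<dots> = ?X * (?X - ?F * ?E)"
      by (simp add: algebra_simps)
    also have "\<dots> = 0"
      by (simp add: FE)
    finally show ?thesis .
  qed
  ultimately show ?thesis
    by simp
qed

lemma bernoulli_convolution:
  "(\<Sum>i\<le>Suc m. of_nat (Suc m choose i) * (bernoulli i * bernoulli (Suc m - i)))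
     = - of_nat m * bernoulli (Suc m) - of_nat (Suc m) * bernoulli m"
proof -
  have "(\<Sum>i\<le>Suc m. of_nat (Suc m choose i) * (bernoulli i * bernoulli (Suc m - i)))
      = fact (Suc m) * (bernoulli_fps * bernoulli_fps) $ Suc m"
    unfolding fps_mult_nth atLeast0AtMost sum_distrib_left
    by (rule sum.cong) (auto simp: binomial_fact field_simps simp del: of_nat_Suc fact_Suc)
  also have "\<dots> = fact (Suc m) * ((1 - fps_X) * bernoulli_fps - fps_X * fps_deriv bernoulli_fps) $ Suc m"
    by (simp only: bernoulli_fps_square)
  also have "\<dots> = - of_nat m * bernoulli (Suc m) - of_nat (Suc m) * bernoulli m"
    by (simp add: algebra_simps del: of_nat_Suc fact_Suc) (simp add: field_simps)
  finally show ?thesis .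
qed

text \<open>\<open>-x / (e\<^sup>-\<^sup>x - 1) = x e\<^sup>x / (e\<^sup>x - 1) = x / (e\<^sup>x - 1) + x\<close>.\<close>
lemma bernoulli_fps_reflect: "bernoulli_fps oo (- fps_X) = bernoulli_fps + fps_X"
proof -
  let ?F = bernoulli_fps and ?E = "fps_exp 1 - 1 :: rat fps" and ?X = "fps_X :: rat fps"
  have reflected: "(?F oo - ?X) * (fps_exp (- 1) - 1) = - ?X"
    using arg_cong[OF bernoulli_fps_mult_exp, of "\<lambda>f. f oo - ?X"]
    by (simp add: fps_compose_mult_distrib fps_compose_sub_distrib)
  moreover have "fps_exp (- 1) * fps_exp 1 = (1 :: rat fps)"
    by (simp flip: fps_exp_add_mult)
  ultimately have "(?F oo - ?X) * ?E = - ((?F oo - ?X) * (fps_exp (- 1) - 1) * fps_exp 1)"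
    by (simp add: algebra_simps)
  also have "\<dots> = ?X * fps_exp 1"
    by (simp only: reflected) simp
  also have "\<dots> = ?X * ?E + ?X"
    by (simp add: algebra_simps)
  finally have "(?F oo - ?X) * ?E = ?X * ?E + ?X" .
  then have "((?F oo - ?X) - ?X) * ?E = ?F * ?E"
    by (simp add: left_diff_distrib bernoulli_fps_mult_exp)
  moreover have "?E \<noteq> 0"
    by (metis fps_X_neq_zero bernoulli_fps_mult_exp mult_zero_right)
  ultimately show ?thesis
    by (simp add: diff_eq_eq)
qed

lemma bernoulli_odd_eq_0:
  assumes "odd k" "k \<noteq> 1"
  shows "bernoulli k = 0"
proof -
  have "(bernoulli_fps oo (- fps_X)) $ k = (bernoulli_fps + fps_X) $ k"
    by (simp only: bernoulli_fps_reflect)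
  then have "- (bernoulli k / fact k) = bernoulli k / fact k"
    using assms by (simp add: fps_compose_uminus')
  then show ?thesis
    by simp
qed

lemma bernoulli_even_convolution:
  assumes "n \<ge> 2"
  shows "(\<Sum>j\<in>{1..<n}. of_nat ((2*n) choose (2*j)) * (bernoulli (2*j) * bernoulli (2*(n-j))))
           = - of_nat (2*n+1) * bernoulli (2*n)"
proof -
  define g where "g i = of_nat ((2*n) choose i) * (bernoulli i * bernoulli (2*n - i))" for i
  have odd_terms: "g i = 0" if "odd i" for i
  proof (cases "i \<le> 2*n")
    case True
    have "i \<noteq> 1 \<or> 2*n - i \<noteq> 1"
      using assms by auto
    moreover have "odd (2*n - i)"
      using \<open>odd i\<close> True by simp
    ultimately have "bernoulli i = 0 \<or> bernoulli (2*n - i) = 0"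
      using \<open>odd i\<close> bernoulli_odd_eq_0 by blast
    then show ?thesis
      by (auto simp: g_def)
  qed (simp add: g_def)
  have "sum g {..2*n} = - of_nat (2*n - 1) * bernoulli (2*n)"
    using bernoulli_convolution[of "2*n - 1"] bernoulli_odd_eq_0[of "2*n - 1"] assms
    by (simp add: g_def Suc_diff_le)
  also have "sum g {..2*n} = sum g ((*) 2 ` {..n})"
  proof (rule sum.mono_neutral_right)
    show "\<forall>i\<in>{..2*n} - (*) 2 ` {..n}. g i = 0"
      by (auto simp: image_iff intro!: odd_terms elim!: evenE)
  qed auto
  also have "\<dots> = (\<Sum>j\<le>n. g (2*j))"
    by (subst sum.reindex) (auto simp: inj_on_def)
  also have "{..n} = insert 0 (insert n {1..<n})"
    using assms by auto
  also have "(\<Sum>j\<in>insert 0 (insert n {1..<n}). g (2*j)) = 2 * bernoulli (2*n) + (\<Sum>j\<in>{1..<n}. g (2*j))"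
    using assms by (simp add: g_def)
  finally have "(\<Sum>j\<in>{1..<n}. g (2*j)) = - of_nat (2*n+1) * bernoulli (2*n)"
    using assms by (simp add: of_nat_diff algebra_simps)
  then show ?thesis
    by (simp add: g_def diff_mult_distrib2)
qed

text \<open>The sign makes \<open>bernoulli2 j = \<bar>B\<^sub>2\<^sub>j\<bar>\<close> for \<open>j \<ge> 1\<close>, see \<open>abs_bernoulli_even\<close>.\<close>
definition bernoulli2 :: "nat \<Rightarrow> rat" where
  "bernoulli2 j = (-1) ^ Suc j * bernoulli (2*j)"

lemma bernoulli2_recurrence:
  assumes "n \<ge> 2"
  shows "of_nat (2*n+1) * bernoulli2 n
           = (\<Sum>j\<in>{1..<n}. of_nat ((2*n) choose (2*j)) * (bernoulli2 j * bernoulli2 (n-j)))"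
proof -
  have signs: "of_nat ((2*n) choose (2*j)) * (bernoulli2 j * bernoulli2 (n-j))
          = (-1) ^ n * (of_nat ((2*n) choose (2*j)) * (bernoulli (2*j) * bernoulli (2*(n-j))))"
    if "j \<in> {1..<n}" for j
  proof -
    have "(-1::rat) ^ Suc j * (-1) ^ Suc (n-j) = (-1) ^ n * (-1) ^ 2"
      using that by (simp flip: power_add)
    then show ?thesis
      by (simp add: bernoulli2_def algebra_simps)
  qed
  have "(\<Sum>j\<in>{1..<n}. of_nat ((2*n) choose (2*j)) * (bernoulli2 j * bernoulli2 (n-j)))
      = (-1) ^ n * (\<Sum>j\<in>{1..<n}. of_nat ((2*n) choose (2*j)) * (bernoulli (2*j) * bernoulli (2*(n-j))))"
    by (simp only: sum.cong[OF refl signs] sum_distrib_left)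
  also have "\<dots> = of_nat (2*n+1) * bernoulli2 n"
    by (simp only: bernoulli_even_convolution[OF assms]) (simp add: bernoulli2_def algebra_simps)
  finally show ?thesis ..
qed

named_theorems bernoulli2_values

lemma bernoulli2_1 [bernoulli2_values]:
  "bernoulli2 1 = 1/6"
  "bernoulli2 (Suc 0) = 1/6" \<comment> \<open>the form produced by \<open>atLeastLessThan_nat_numeral\<close>\<close>
  by (simp_all add: bernoulli2_def bernoulli_2)

lemma bernoulli2_eval:
  "n \<ge> 2 \<Longrightarrow> bernoulli2 n
     = (\<Sum>j\<in>{1..<n}. of_nat ((2*n) choose (2*j)) * (bernoulli2 j * bernoulli2 (n-j))) / of_nat (2*n+1)"
  using bernoulli2_recurrence[of n] by (simp add: eq_divide_eq mult.commute del: of_nat_Suc)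

lemma bernoulli2_2 [bernoulli2_values]: "bernoulli2 2 = 1/30"
  by (subst bernoulli2_eval) (simp_all add: atLeastLessThan_nat_numeral binomial_fact' fact_numeral bernoulli2_values)

lemma bernoulli2_3 [bernoulli2_values]: "bernoulli2 3 = 1/42"
  by (subst bernoulli2_eval) (simp_all add: atLeastLessThan_nat_numeral binomial_fact' fact_numeral bernoulli2_values)

lemma bernoulli2_4 [bernoulli2_values]: "bernoulli2 4 = 1/30"
  by (subst bernoulli2_eval) (simp_all add: atLeastLessThan_nat_numeral binomial_fact' fact_numeral bernoulli2_values)

lemma bernoulli2_5 [bernoulli2_values]: "bernoulli2 5 = 5/66"
  by (subst bernoulli2_eval) (simp_all add: atLeastLessThan_nat_numeral binomial_fact' fact_numeral bernoulli2_values)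

lemma bernoulli2_6 [bernoulli2_values]: "bernoulli2 6 = 691/2730"
  by (subst bernoulli2_eval) (simp_all add: atLeastLessThan_nat_numeral binomial_fact' fact_numeral bernoulli2_values)

lemma bernoulli2_7 [bernoulli2_values]: "bernoulli2 7 = 7/6"
  by (subst bernoulli2_eval) (simp_all add: atLeastLessThan_nat_numeral binomial_fact' fact_numeral bernoulli2_values)

lemma bernoulli2_8 [bernoulli2_values]: "bernoulli2 8 = 3617/510"
  by (subst bernoulli2_eval) (simp_all add: atLeastLessThan_nat_numeral binomial_fact' fact_numeral bernoulli2_values)

lemma bernoulli2_9 [bernoulli2_values]: "bernoulli2 9 = 43867/798"
  by (subst bernoulli2_eval) (simp_all add: atLeastLessThan_nat_numeral binomial_fact' fact_numeral bernoulli2_values)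

lemma bernoulli2_10 [bernoulli2_values]: "bernoulli2 10 = 174611/330"
  by (subst bernoulli2_eval) (simp_all add: atLeastLessThan_nat_numeral binomial_fact' fact_numeral bernoulli2_values)

lemma bernoulli2_11 [bernoulli2_values]: "bernoulli2 11 = 854513/138"
  by (subst bernoulli2_eval) (simp_all add: atLeastLessThan_nat_numeral binomial_fact' fact_numeral bernoulli2_values)

lemma bernoulli2_12 [bernoulli2_values]: "bernoulli2 12 = 236364091/2730"
  by (subst bernoulli2_eval) (simp_all add: atLeastLessThan_nat_numeral binomial_fact' fact_numeral bernoulli2_values)

lemma bernoulli2_13 [bernoulli2_values]: "bernoulli2 13 = 8553103/6"
  by (subst bernoulli2_eval) (simp_all add: atLeastLessThan_nat_numeral binomial_fact' fact_numeral bernoulli2_values)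

lemma bernoulli2_14 [bernoulli2_values]: "bernoulli2 14 = 23749461029/870"
  by (subst bernoulli2_eval) (simp_all add: atLeastLessThan_nat_numeral binomial_fact' fact_numeral bernoulli2_values)

lemma bernoulli2_pos: "n \<ge> 1 \<Longrightarrow> bernoulli2 n > 0"
proof (induction n rule: less_induct)
  case (less n)
  show ?case
  proof (cases "n = 1")
    case False
    then have "n \<ge> 2"
      using less.prems by simp
    have "0 < (\<Sum>j\<in>{1..<n}. of_nat ((2*n) choose (2*j)) * (bernoulli2 j * bernoulli2 (n-j)))"
      using \<open>n \<ge> 2\<close> by (intro sum_pos) (auto intro!: mult_pos_pos less.IH)
    then have "0 < of_nat (2*n+1) * bernoulli2 n"
      by (simp only: bernoulli2_recurrence[OF \<open>n \<ge> 2\<close>])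
    then show ?thesis
      by (simp add: zero_less_mult_iff)
  qed (simp add: bernoulli2_values)
qed

lemma abs_bernoulli_even:
  assumes "j \<ge> 1"
  shows "\<bar>bernoulli (2*j)\<bar> = bernoulli2 j"
proof -
  have "\<bar>bernoulli (2*j)\<bar> = \<bar>bernoulli2 j\<bar>"
    by (simp add: bernoulli2_def abs_mult power_abs)
  then show ?thesis
    using bernoulli2_pos[OF assms] by simp
qed

text \<open>Only the two boundary terms \<open>j = 1\<close> and \<open>j = n\<close> of the recurrence for \<open>bernoulli2 (Suc n)\<close>
  are kept.\<close>
lemma bernoulli2_growth:
  assumes "n \<ge> 2"
  shows "(of_nat n + 1) * (2 * of_nat n + 1) * bernoulli2 n \<le> 3 * (2 * of_nat n + 3) * bernoulli2 (Suc n)"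
proof -
  define f where "f j = of_nat ((2 * Suc n) choose (2*j)) * (bernoulli2 j * bernoulli2 (Suc n - j))" for j
  have "f 1 = of_nat ((2 * Suc n) choose 2) * (bernoulli2 1 * bernoulli2 n)"
    by (simp add: f_def)
  also have "(2 * Suc n) choose 2 = Suc n * (2*n + 1)"
    by (simp add: choose_two)
  finally have "f 1 = (of_nat n + 1) * (2 * of_nat n + 1) * bernoulli2 n / 6"
    by (simp add: bernoulli2_values algebra_simps)
  moreover have "f n = f 1"
    using binomial_symmetric[of 2 "2 * Suc n"] assms by (simp add: f_def Suc_diff_le)
  moreover have "f 1 + f n = sum f {1, n}"
    using assms by simp
  moreover have "sum f {1, n} \<le> sum f {1..<Suc n}"
    using assms by (intro sum_mono2) (auto simp: f_def intro!: mult_nonneg_nonneg less_imp_le[OF bernoulli2_pos])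
  moreover have "sum f {1..<Suc n} = (2 * of_nat n + 3) * bernoulli2 (Suc n)"
    using bernoulli2_recurrence[of "Suc n"] assms by (simp add: f_def add.commute)
  ultimately show ?thesis
    by linarith
qed

lemma bernoulli2_ge:
  assumes "n \<ge> 9"
  shows "bernoulli2 n \<ge> 4 * of_nat n"
  using assms
proof (induction n rule: dec_induct)
  case base
  show ?case
    by (simp add: bernoulli2_values)
next
  case (step n)
  define x where "x = (of_nat n :: rat)"
  have "x \<ge> 9"
    using step.hyps by (simp add: x_def)
  then have "9 * (2*x + 1) \<le> x * (2*x + 1)"
    by (intro mult_right_mono) auto
  then have "3 * (2*x + 3) \<le> x * (2*x + 1)"
    using \<open>x \<ge> 9\<close> by (simp add: distrib_left)
  then have "3 * (2*x + 3) * (4 * (x+1)) \<le> x * (2*x + 1) * (4 * (x+1))"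
    using \<open>x \<ge> 9\<close> by (intro mult_right_mono) auto
  also have "\<dots> = (x+1) * (2*x + 1) * (4*x)"
    by (simp add: algebra_simps)
  also have "\<dots> \<le> (x+1) * (2*x + 1) * bernoulli2 n"
    using step.IH \<open>x \<ge> 9\<close> by (intro mult_left_mono) (auto simp: x_def)
  also have "\<dots> \<le> 3 * (2*x + 3) * bernoulli2 (Suc n)"
    using bernoulli2_growth[of n] step.hyps by (simp add: x_def)
  finally have "4 * (x+1) \<le> bernoulli2 (Suc n)"
    by (rule mult_left_le_imp_le) (use \<open>x \<ge> 9\<close> in simp)
  then show ?case
    by (simp add: x_def)
qed

lemma v_eq_prod_bernoulli2: "v n = (\<Prod>i=1..n. bernoulli2 i / of_nat (4*i))"
  unfolding v_def by (rule prod.cong) (simp_all add: abs_bernoulli_even)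

lemma v_Suc: "v (Suc n) = v n * (bernoulli2 (Suc n) / of_nat (4 * Suc n))"
  by (simp add: v_eq_prod_bernoulli2)

lemma v_numeral: "v (numeral k) = v (pred_numeral k) * (bernoulli2 (numeral k) / of_nat (4 * numeral k))"
  by (simp add: numeral_eq_Suc v_Suc)

named_theorems v_values

lemma v_0 [v_values]: "v 0 = 1"
  by (simp add: v_def)

lemma v_1 [v_values]:
  "v 1 = 1 / 24"
  "v (Suc 0) = 1 / 24" \<comment> \<open>the form produced by \<open>pred_numeral 2\<close>\<close>
  using v_Suc[of 0] by (simp_all add: v_values bernoulli2_values)

lemma v_2 [v_values]: "v 2 = 1 / 5760"
  by (subst v_numeral) (simp add: v_values bernoulli2_values)

lemma v_3 [v_values]: "v 3 = 1 / 2903040"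
  by (subst v_numeral) (simp add: v_values bernoulli2_values)

lemma v_4 [v_values]: "v 4 = 1 / 1393459200"
  by (subst v_numeral) (simp add: v_values bernoulli2_values)

lemma v_5 [v_values]: "v 5 = 1 / 367873228800"
  by (subst v_numeral) (simp add: v_values bernoulli2_values)

lemma v_6 [v_values]: "v 6 = 691 / 24103053950976000"
  by (subst v_numeral) (simp add: v_values bernoulli2_values)

lemma v_7 [v_values]: "v 7 = 691 / 578473294823424000"
  by (subst v_numeral) (simp add: v_values bernoulli2_values)

lemma v_8 [v_values]: "v 8 = 2499347 / 9440684171518279680000"
  by (subst v_numeral) (simp add: v_values bernoulli2_values)

lemma v_9 [v_values]: "v 9 = 109638854849 / 271211974879377138647040000"
  by (subst v_numeral) (simp add: v_values bernoulli2_values)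

lemma v_10 [v_values]: "v 10 = 19144150084038739 / 3579998068407778230140928000000"
  by (subst v_numeral) (simp add: v_values bernoulli2_values)

lemma v_11 [v_values]: "v 11 = 1487175010978381361737 / 1976158933761093583037792256000000"
  by (subst v_numeral) (simp add: v_values bernoulli2_values)

lemma v_12 [v_values]: "v 12 = 351514769627820131218308186067 / 258955866680053703121272297226240000000"
  by (subst v_numeral) (simp add: v_values bernoulli2_values)

lemma v_13 [v_values]: "v 13 = 231272463896001326752592723167247377 / 6214940800321288874910535133429760000000"
  by (subst v_numeral) (simp add: v_values bernoulli2_values)

lemma v_14 [v_values]: "v 14 = 784656624054127574091856571938503861323424419 / 43255987970236170569377324528671129600000000"
  by (subst v_numeral) (simp add: v_values bernoulli2_values)

lemma v_gt_1:
  assumes "n \<ge> 14"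
  shows "v n > 1"
  using assms
proof (induction n rule: dec_induct)
  case base
  show ?case
    by (simp add: v_values)
next
  case (step n)
  have "1 \<le> bernoulli2 (Suc n) / of_nat (4 * Suc n)"
    using bernoulli2_ge[of "Suc n"] step.hyps by simp
  then have "v n * 1 \<le> v n * (bernoulli2 (Suc n) / of_nat (4 * Suc n))"
    using step.IH by (intro mult_left_mono) auto
  then show ?case
    using step.IH by (simp only: v_Suc mult_1_right)
qed

lemma numerator_neq_1_if_not_dvd:
  assumes "\<not> (numeral a :: int) dvd numeral b"
  shows "fst (quotient_of (numeral a / numeral b :: rat)) \<noteq> 1"
proof
  assume "fst (quotient_of (numeral a / numeral b :: rat)) = 1"
  then obtain q where q: "quotient_of (numeral a / numeral b :: rat) = (1, q)"
    by (metis prod.collapse)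
  have "(numeral a / numeral b :: rat) = of_int 1 / of_int q"
    by (rule quotient_of_div[OF q])
  moreover have "q > 0"
    by (rule quotient_of_denom_pos[OF q])
  ultimately have "(of_int (numeral a * q) :: rat) = of_int (numeral b)"
    by (simp add: field_simps)
  then have "numeral a * q = (numeral b :: int)"
    by (simp only: of_int_eq_iff)
  with assms show False
    by (metis dvd_triv_left)
qed

lemma v_numerator_neq_1:
  assumes "n \<in> {6..13}"
  shows "fst (quotient_of (v n)) \<noteq> 1"
proof -
  have "n \<in> {6, 7, 8, 9, 10, 11, 12, 13}"
    using assms by auto
  then show ?thesis
    by (elim insertE emptyE) (simp_all add: v_values numerator_neq_1_if_not_dvd)
qed

theorem lemma2p5:
  fixes n :: nat
  assumes "n \<ge> 6"
  shows "v n > 1 \<or> fst (quotient_of (v n)) \<noteq> 1"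
proof (cases "n \<ge> 14")
  case True
  then show ?thesis
    using v_gt_1 by blast
next
  case False
  with assms show ?thesis
    using v_numerator_neq_1 by simp
qed

end
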